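(* Let $n$ be a positive integer and let $G$ be a pure $(2n)$-sparse gapset of genus $g=3n+1$ with multiplicity $m$. If $G$ is symmetric, then $m=2n$.
   Context: A gapset is a finite set $G\subset\mathbb{N}=\{1,2,\dots\}$ such that whenever $z\in G$ and $z=x+y$ with $x,y\in\mathbb{N}$, then $x\in G$ or $y\in G$; its genus is $g=\#G$. Writing $G=\{\ell_1<\dots<\ell_g\}$, multiplicity $m(G)=\min\{s\in\mathbb{N}:s\notin G\}$, Frobenius number $F(G)=\ell_g$; $G$ is symmetric if $F(G)=2g-1$. $G$ is pure $\kappa$-sparse if $\ell_{i+1}-\ell_i\le\kappa$ for all $i$ with equality for some $i$. *)

theory Defs
  imports Main
begin

definition gapset :: "nat set \<Rightarrow> bool" where
  "gapset G \<longleftrightarrow> finite G \<and> 0 \<notin> G \<and>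
     (\<forall>z \<in> G. \<forall>x y. x \<ge> 1 \<and> y \<ge> 1 \<and> z = x + y \<longrightarrow> x \<in> G \<or> y \<in> G)"

definition genus :: "nat set \<Rightarrow> nat" where
  "genus G = card G"

definition multiplicity :: "nat set \<Rightarrow> nat" where
  "multiplicity G = (LEAST s. s \<ge> 1 \<and> s \<notin> G)"

definition frobenius :: "nat set \<Rightarrow> nat" where
  "frobenius G = Max G"

definition symmetric_gapset :: "nat set \<Rightarrow> bool" where
  "symmetric_gapset G \<longleftrightarrow> frobenius G = 2 * genus G - 1"

definition consecutive :: "nat set \<Rightarrow> nat \<Rightarrow> nat \<Rightarrow> bool" where
  "consecutive G a b \<longleftrightarrow> a \<in> G \<and> b \<in> G \<and> a < b \<and> (\<forall>c. a < c \<and> c < b \<longrightarrow> c \<notin> G)"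

definition pure_sparse :: "nat \<Rightarrow> nat set \<Rightarrow> bool" where
  "pure_sparse \<kappa> G \<longleftrightarrow>
     (\<forall>a b. consecutive G a b \<longrightarrow> b - a \<le> \<kappa>) \<and>
     (\<exists>a b. consecutive G a b \<and> b - a = \<kappa>)"

end

theory Submission
  imports Defs
begin

text \<open>
  In any gapset with multiplicity \<open>m\<close>, two consecutive gaps differ by at most \<open>m\<close>:
  if \<open>b - a > m\<close> then \<open>b = (b - m) + m\<close> with neither summand a gap.
  In a symmetric gapset with Frobenius number \<open>F\<close>, \<open>x \<mapsto> F - x\<close> exchanges gaps and non-gaps
  below \<open>F\<close>; since \<open>1, \<dots>, m - 1\<close> are gaps, \<open>F - m\<close> and \<open>F\<close> are consecutive gaps at distance
  exactly \<open>m\<close>. Hence the maximal distance \<open>\<kappa>\<close> of a pure \<open>\<kappa>\<close>-sparse symmetric gapset equals \<open>m\<close>.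
\<close>

lemma gapsetD:
  assumes "gapset G"
  shows "finite G"
    and "\<And>x y. x + y \<in> G \<Longrightarrow> x \<ge> 1 \<Longrightarrow> y \<ge> 1 \<Longrightarrow> x \<in> G \<or> y \<in> G"
  using assms unfolding gapset_def by blast+

lemma multiplicity_not_in:
  assumes "finite G"
  shows "multiplicity G \<ge> 1" and "multiplicity G \<notin> G"
proof -
  have "Suc (Max G) \<ge> 1 \<and> Suc (Max G) \<notin> G"
    using Max_ge[OF assms, of "Suc (Max G)"] by auto
  then have "multiplicity G \<ge> 1 \<and> multiplicity G \<notin> G"
    unfolding multiplicity_def by (rule LeastI)
  then show "multiplicity G \<ge> 1" and "multiplicity G \<notin> G" by auto
qed

lemma less_multiplicity_in:
  assumes "1 \<le> s" and "s < multiplicity G"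
  shows "s \<in> G"
  using assms not_less_Least unfolding multiplicity_def by blast

lemma multiplicity_le_Suc_genus:
  assumes "finite G"
  shows "multiplicity G \<le> genus G + 1"
proof -
  have "{1..<multiplicity G} \<subseteq> G" using less_multiplicity_in by auto
  then have "card {1..<multiplicity G} \<le> card G" using assms card_mono by blast
  then show ?thesis unfolding genus_def by simp
qed

lemma consecutive_diff_le_multiplicity:
  assumes "gapset G" and "consecutive G a b"
  shows "b - a \<le> multiplicity G"
proof (rule ccontr)
  let ?m = "multiplicity G"
  assume "\<not> b - a \<le> ?m"
  then have between: "a < b - ?m" "b - ?m < b"
    using multiplicity_not_in(1)[OF gapsetD(1)[OF assms(1)]] by auto
  then have "b - ?m \<notin> G" using assms(2) unfolding consecutive_def by blast
  moreover have "(b - ?m) + ?m \<in> G" using assms(2) between unfolding consecutive_def by simp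
  ultimately show False
    using gapsetD(2)[OF assms(1)] multiplicity_not_in[OF gapsetD(1)[OF assms(1)]] between(1)
    by fastforce
qed

lemma gapset_Max_minus_nongap:
  assumes "gapset G" and "G \<noteq> {}" and "x \<le> Max G" and "x \<notin> G"
  shows "Max G - x \<in> G"
proof (rule ccontr)
  assume y: "Max G - x \<notin> G"
  have max_in: "Max G \<in> G" using assms(1,2) gapsetD(1) by simp
  then have "x \<noteq> 0" "x \<noteq> Max G" using y assms(4) by (metis minus_nat.diff_0, blast)
  then have "x \<ge> 1" "Max G - x \<ge> 1" using assms(3) by auto
  moreover have "x + (Max G - x) \<in> G" using max_in assms(3) by simp
  ultimately show False using gapsetD(2)[OF assms(1)] assms(4) y by blast
qed

text \<open>Symmetry makes \<open>x \<mapsto> F - x\<close> a bijection from the \<open>g\<close> non-gaps below \<open>F = 2 g - 1\<close> onto the \<open>g\<close> gaps.\<close>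

lemma symmetric_gapset_Max_minus_gap:
  assumes "gapset G" and "symmetric_gapset G" and "y \<in> G"
  shows "Max G - y \<notin> G"
proof -
  let ?F = "Max G"
  define A where "A = {x. x \<le> ?F \<and> x \<notin> G}"
  have fin: "finite G" using gapsetD(1)[OF assms(1)] .
  have ne: "G \<noteq> {}" using assms(3) by blast
  have "G \<subseteq> {..?F}" using fin by auto
  then have split: "{..?F} = A \<union> G" unfolding A_def by auto
  have "card (A \<union> G) = card A + card G"
    by (rule card_Un_disjoint) (auto simp: A_def fin)
  then have "Suc ?F = card A + card G" using split by (metis card_atMost)
  moreover have "?F = 2 * card G - 1"
    using assms(2) unfolding symmetric_gapset_def frobenius_def genus_def .
  moreover have "card G \<ge> 1" using fin ne by (simp add: Suc_le_eq card_gt_0_iff)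
  ultimately have card_A: "card A = card G" by linarith
  have inj: "inj_on (\<lambda>x. ?F - x) A" unfolding A_def inj_on_def by auto
  have "(\<lambda>x. ?F - x) ` A \<subseteq> G"
    using gapset_Max_minus_nongap[OF assms(1) ne] unfolding A_def by blast
  then have "(\<lambda>x. ?F - x) ` A = G"
    using card_subset_eq[OF fin] card_image[OF inj] card_A by metis
  with assms(3) obtain x where "x \<in> A" "y = ?F - x" by blast
  then show ?thesis unfolding A_def by auto
qed

lemma symmetric_gapset_consecutive_Max:
  assumes "gapset G" and "symmetric_gapset G" and "multiplicity G \<le> Max G"
  shows "consecutive G (Max G - multiplicity G) (Max G)"
  unfolding consecutive_def
proof (intro conjI allI impI)
  let ?F = "Max G" and ?m = "multiplicity G"
  have fin: "finite G" using assms(1) gapsetD by blast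
  have m: "?m \<ge> 1" "?m \<notin> G" using multiplicity_not_in[OF fin] by auto
  have ne: "G \<noteq> {}"
  proof
    assume "G = {}"
    then have "?F = 0" using assms(2) by (simp add: symmetric_gapset_def frobenius_def genus_def)
    then show False using m(1) assms(3) by simp
  qed
  show "?F \<in> G" using fin ne by simp
  show "?F - ?m \<in> G" using gapset_Max_minus_nongap[OF assms(1) ne assms(3) m(2)] .
  show "?F - ?m < ?F" using m(1) assms(3) by simp
  fix c assume c: "?F - ?m < c \<and> c < ?F"
  then have "?F - c \<in> G" using less_multiplicity_in[of "?F - c"] assms(3) by auto
  then have "?F - (?F - c) \<notin> G" using symmetric_gapset_Max_minus_gap[OF assms(1,2)] by blast
  then show "c \<notin> G" using c by simp
qed

lemma symmetric_pure_sparse_multiplicity: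
  assumes "gapset G" and "symmetric_gapset G" and "pure_sparse \<kappa> G" and "genus G \<ge> 2"
  shows "multiplicity G = \<kappa>"
proof (rule antisym)
  have "multiplicity G \<le> genus G + 1"
    using multiplicity_le_Suc_genus gapsetD(1)[OF assms(1)] .
  also have "\<dots> \<le> Max G"
    using assms(2,4) unfolding symmetric_gapset_def frobenius_def by simp
  finally have m_le: "multiplicity G \<le> Max G" .
  then have "consecutive G (Max G - multiplicity G) (Max G)"
    using symmetric_gapset_consecutive_Max[OF assms(1,2)] by blast
  then show "multiplicity G \<le> \<kappa>"
    using assms(3) m_le unfolding pure_sparse_def by fastforce
  obtain a b where "consecutive G a b" "b - a = \<kappa>"
    using assms(3) unfolding pure_sparse_def by blast
  then show "\<kappa> \<le> multiplicity G"
    using consecutive_diff_le_multiplicity[OF assms(1)] by blast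
qed

theorem mainTheorem11:
  fixes n :: nat and G :: "nat set"
  assumes "n \<ge> 1"
    and "gapset G"
    and "pure_sparse (2 * n) G"
    and "genus G = 3 * n + 1"
    and "symmetric_gapset G"
  shows "multiplicity G = 2 * n"
  using symmetric_pure_sparse_multiplicity[OF assms(2,5,3)] assms(1,4) by simp

end
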